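(* Let $X$ be a finite set and $D$ a directed distance on $X$. Then the tight-span $T_D$ is a tree if and only if $D$ has an oriented tree realisation $(\Gamma,\alpha,\mathcal{F})$ such that $\Gamma$ is a directed path.
   Context: A directed distance on $X$ is a map $D:X\times X\to\mathbb{R}_{\ge0}$ with $D(x,x)=0$ (not necessarily symmetric). Let $X_l,X_r$ be two disjoint copies of $X$ (write $x_l,x_r$ for the copies of $x$). $P_D=\{f\in\mathbb{R}^{X_l\cup X_r}:f\ge0,\ f(x_l)+f(y_r)\ge D(x,y)\ \forall x,y\in X\}$ and $T_D$ is the set of minimal elements of $P_D$ for the coordinatewise order; $T_D$ is a polyhedral complex (the union of bounded faces of $P_D$), and "$T_D$ is a tree" means it has dimension at most $1$. An oriented tree $\Gamma$ is a directed graph whose underlying undirected graph is a tree; with edge lengths $\alpha:E(\Gamma)\to\mathbb{R}_{\ge0}$, $D_{\Gamma,\alpha}(u,v)$ is the sum of $\alpha(e)$ over edges on the undirected $u$–$v$ path directed from $u$ towards $v$, and $D_{\Gamma,\alpha}(U,W)=\min_{u\in U,w\in W}D_{\Gamma,\alpha}(u,w)$. $(\Gamma,\alpha,\mathcal{F})$, $\mathcal{F}=\{F_x:x\in X\}$ subtrees of $\Gamma$, is an oriented tree realisation of $D$ if $D(x,y)=D_{\Gamma,\alpha}(F_x,F_y)$ for all $x,y$. $\Gamma$ is a directed path if its underlying tree is a path and all edges are oriented in the same direction along it. *)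

theory Defs
  imports "HOL-Analysis.Analysis"
begin

text \<open>The finite set X is represented by a finite type 'a. The space of functions on
  X_l \<union> X_r is real ^ ('a + 'a), with Inl x the copy x_l and Inr x the copy x_r.\<close>

definition directed_distance :: "('a \<Rightarrow> 'a \<Rightarrow> real) \<Rightarrow> bool" where
  "directed_distance D \<longleftrightarrow> (\<forall>x y. D x y \<ge> 0) \<and> (\<forall>x. D x x = 0)"

definition PD :: "('a::finite \<Rightarrow> 'a \<Rightarrow> real) \<Rightarrow> (real ^ ('a + 'a)) set" where
  "PD D = {f. (\<forall>i. f $ i \<ge> 0) \<and> (\<forall>x y. f $ (Inl x) + f $ (Inr y) \<ge> D x y)}"

definition TD :: "('a::finite \<Rightarrow> 'a \<Rightarrow> real) \<Rightarrow> (real ^ ('a + 'a)) set" where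
  "TD D = {f \<in> PD D. \<forall>g \<in> PD D. (\<forall>i. g $ i \<le> f $ i) \<longrightarrow> g = f}"

text \<open>T_D is a tree: the polyhedral complex T_D has dimension at most 1, i.e. every convex
  subset of T_D (in particular every cell) has affine dimension at most 1.\<close>
definition tight_span_is_tree :: "('a::finite \<Rightarrow> 'a \<Rightarrow> real) \<Rightarrow> bool" where
  "tight_span_is_tree D \<longleftrightarrow> (\<forall>S. convex S \<and> S \<subseteq> TD D \<longrightarrow> aff_dim S \<le> 1)"

definition uadj :: "(nat \<times> nat) set \<Rightarrow> nat \<Rightarrow> nat \<Rightarrow> bool" where
  "uadj E u v \<longleftrightarrow> (u, v) \<in> E \<or> (v, u) \<in> E"

definition upath :: "(nat \<times> nat) set \<Rightarrow> nat list \<Rightarrow> nat \<Rightarrow> nat \<Rightarrow> bool" where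
  "upath E p u v \<longleftrightarrow> p \<noteq> [] \<and> hd p = u \<and> last p = v \<and> distinct p \<and>
     (\<forall>i. Suc i < length p \<longrightarrow> uadj E (p ! i) (p ! Suc i))"

definition oriented_tree :: "nat set \<Rightarrow> (nat \<times> nat) set \<Rightarrow> bool" where
  "oriented_tree V E \<longleftrightarrow> finite V \<and> V \<noteq> {} \<and> E \<subseteq> V \<times> V \<and>
     (\<forall>u v. (u, v) \<in> E \<longrightarrow> u \<noteq> v \<and> (v, u) \<notin> E) \<and>
     (\<forall>u\<in>V. \<forall>v\<in>V. \<exists>!p. upath E p u v)"

definition tree_dist :: "(nat \<times> nat) set \<Rightarrow> (nat \<times> nat \<Rightarrow> real) \<Rightarrow> nat \<Rightarrow> nat \<Rightarrow> real" where
  "tree_dist E \<alpha> u v = (let p = (THE p. upath E p u v) in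
     (\<Sum>i<length p - 1. if (p ! i, p ! Suc i) \<in> E then \<alpha> (p ! i, p ! Suc i) else 0))"

definition tree_set_dist :: "(nat \<times> nat) set \<Rightarrow> (nat \<times> nat \<Rightarrow> real) \<Rightarrow> nat set \<Rightarrow> nat set \<Rightarrow> real" where
  "tree_set_dist E \<alpha> U W = Min {tree_dist E \<alpha> u w | u w. u \<in> U \<and> w \<in> W}"

definition subtree :: "nat set \<Rightarrow> (nat \<times> nat) set \<Rightarrow> nat set \<Rightarrow> bool" where
  "subtree V E F \<longleftrightarrow> F \<noteq> {} \<and> F \<subseteq> V \<and>
     (\<forall>u\<in>F. \<forall>v\<in>F. \<exists>p. upath E p u v \<and> set p \<subseteq> F)"

definition oriented_tree_realisation ::
  "('a \<Rightarrow> 'a \<Rightarrow> real) \<Rightarrow> nat set \<Rightarrow> (nat \<times> nat) set \<Rightarrow> (nat \<times> nat \<Rightarrow> real) \<Rightarrow> ('a \<Rightarrow> nat set) \<Rightarrow> bool" where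
  "oriented_tree_realisation D V E \<alpha> F \<longleftrightarrow> oriented_tree V E \<and> (\<forall>e\<in>E. \<alpha> e \<ge> 0) \<and>
     (\<forall>x. subtree V E (F x)) \<and> (\<forall>x y. D x y = tree_set_dist E \<alpha> (F x) (F y))"

definition directed_path :: "nat set \<Rightarrow> (nat \<times> nat) set \<Rightarrow> bool" where
  "directed_path V E \<longleftrightarrow> (\<exists>p. distinct p \<and> set p = V \<and>
     E = {(p ! i, p ! Suc i) | i. Suc i < length p})"

end

theory Submission
  imports Defs
begin

(*
  A point f of T_D is determined by its two halves g = f|X_l and h = f|X_r, which satisfy the
  fixed-point equations g x = max 0 (max_y D x y - h y) and h y = max 0 (max_x D x y - g x).

  Realisations by a directed path are exactly the distances of interval form
  D x y = max 0 (a y - b x), a \<le> b: place the vertices on a line at their distance from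
  the source, and let F x be the vertices in [a x, b x].

  For such D the left half of every point of T_D is x \<mapsto> max 0 (C - b x) for a scalar C, so
  after negating the right coordinates T_D is a chain for the componentwise order; a convex
  chain is collinear, so T_D is a tree.

  Conversely, suppose T_D is a tree. If two truncations z \<mapsto> max 0 (D z y - c) and
  z \<mapsto> max 0 (D z w - d) were incomparable, raising the levels c, d by 0 \<le> s \<le> t \<le> \<epsilon>
  would produce points of T_D depending affinely on (s, t) for small \<epsilon>, spanning a triangle.
  Hence the truncations are nested, and this forces the interval form with
  a y = max_z D z y and b x = max_{z,w} (D z w - D x w).
*)

section \<open>Tight spans as fixed points\<close>

lemma Max_range_ge: "(f::'a::finite \<Rightarrow> real) y \<le> (MAX y. f y)"
  by (simp add: Max_ge)

lemma Max_range_le: "(\<And>y. (f::'a::finite \<Rightarrow> real) y \<le> c) \<Longrightarrow> (MAX y. f y) \<le> c"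
  by (simp add: Max_le_iff)

lemma Max_range_attained: "\<exists>y. (MAX y. (f::'a::finite \<Rightarrow> real) y) = f y"
proof -
  have "(MAX y. f y) \<in> range f" by (rule Max_in) auto
  then show ?thesis by blast
qed

definition left_dual :: "('a::finite \<Rightarrow> 'a \<Rightarrow> real) \<Rightarrow> ('a \<Rightarrow> real) \<Rightarrow> 'a \<Rightarrow> real" where
  "left_dual D h x = max 0 (MAX y. D x y - h y)"

definition right_dual :: "('a::finite \<Rightarrow> 'a \<Rightarrow> real) \<Rightarrow> ('a \<Rightarrow> real) \<Rightarrow> 'a \<Rightarrow> real" where
  "right_dual D g y = max 0 (MAX x. D x y - g x)"

definition join_vec :: "('a::finite \<Rightarrow> real) \<Rightarrow> ('a \<Rightarrow> real) \<Rightarrow> real ^ ('a + 'a)" where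
  "join_vec g h = (\<chi> i. case i of Inl x \<Rightarrow> g x | Inr y \<Rightarrow> h y)"

lemma join_vec_Inl [simp]: "join_vec g h $ Inl x = g x"
  and join_vec_Inr [simp]: "join_vec g h $ Inr y = h y"
  by (simp_all add: join_vec_def)

lemma left_dual_nonneg: "0 \<le> left_dual D h x"
  by (simp add: left_dual_def)

lemma right_dual_nonneg: "0 \<le> right_dual D g y"
  by (simp add: right_dual_def)

lemma left_dual_ge: "D x y - h y \<le> left_dual D h x"
  unfolding left_dual_def using Max_range_ge[of "\<lambda>y. D x y - h y" y] by linarith

lemma right_dual_ge: "D x y - g x \<le> right_dual D g y"
  unfolding right_dual_def using Max_range_ge[of "\<lambda>x. D x y - g x" x] by linarith

lemma left_dual_le: "(\<And>y. D x y - h y \<le> c) \<Longrightarrow> 0 \<le> c \<Longrightarrow> left_dual D h x \<le> c"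
  unfolding left_dual_def using Max_range_le[of "\<lambda>y. D x y - h y" c] by simp

lemma right_dual_le: "(\<And>x. D x y - g x \<le> c) \<Longrightarrow> 0 \<le> c \<Longrightarrow> right_dual D g y \<le> c"
  unfolding right_dual_def using Max_range_le[of "\<lambda>x. D x y - g x" c] by simp

lemma left_dual_antimono:
  assumes "\<And>y. h y \<le> h' y" shows "left_dual D h' x \<le> left_dual D h x"
proof (rule left_dual_le)
  show "D x y - h' y \<le> left_dual D h x" for y
    using left_dual_ge[of D x y h] assms[of y] by linarith
qed (rule left_dual_nonneg)

lemma right_dual_antimono:
  assumes "\<And>x. g x \<le> g' x" shows "right_dual D g' y \<le> right_dual D g y"
proof (rule right_dual_le)
  show "D x y - g' x \<le> right_dual D g y" for x
    using right_dual_ge[of D x y g] assms[of x] by linarith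
qed (rule right_dual_nonneg)

lemma PD_left_dual_le: "f \<in> PD D \<Longrightarrow> left_dual D (\<lambda>y. f $ Inr y) x \<le> f $ Inl x"
  by (rule left_dual_le) (auto simp: PD_def algebra_simps)

lemma PD_right_dual_le: "f \<in> PD D \<Longrightarrow> right_dual D (\<lambda>x. f $ Inl x) y \<le> f $ Inr y"
  by (rule right_dual_le) (auto simp: PD_def algebra_simps)

lemma TD_lower_coordinate:
  assumes f: "f \<in> TD D" and g: "(\<chi> j. if j = i then v else f $ j) \<in> PD D" and v: "v \<le> f $ i"
  shows "f $ i = v"
proof -
  have "\<forall>j. (\<chi> j. if j = i then v else f $ j) $ j \<le> f $ j"
    using v by simp
  with f g have "(\<chi> j. if j = i then v else f $ j) = f"
    unfolding TD_def by blast
  then have "(\<chi> j. if j = i then v else f $ j) $ i = f $ i"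
    by simp
  then show ?thesis by simp
qed

lemma TD_fixed_point:
  assumes f: "f \<in> TD D"
  shows "f $ Inl x = left_dual D (\<lambda>y. f $ Inr y) x"
    and "f $ Inr y = right_dual D (\<lambda>x. f $ Inl x) y"
proof -
  have P: "f \<in> PD D" using f by (simp add: TD_def)
  then have nn: "\<And>i. 0 \<le> f $ i" and c: "\<And>x y. D x y \<le> f $ Inl x + f $ Inr y"
    by (auto simp: PD_def)
  let ?v = "left_dual D (\<lambda>y. f $ Inr y) x"
  have "(\<chi> j. if j = Inl x then ?v else f $ j) \<in> PD D"
    using nn c left_dual_nonneg[of D _ x] left_dual_ge[of D x _ "\<lambda>y. f $ Inr y"]
    by (auto simp: PD_def algebra_simps)
  from TD_lower_coordinate[OF f this PD_left_dual_le[OF P]]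
  show "f $ Inl x = ?v" .
  let ?w = "right_dual D (\<lambda>x. f $ Inl x) y"
  have "(\<chi> j. if j = Inr y then ?w else f $ j) \<in> PD D"
    using nn c right_dual_nonneg[of D _ y] right_dual_ge[of D _ y "\<lambda>x. f $ Inl x"]
    by (auto simp: PD_def algebra_simps)
  from TD_lower_coordinate[OF f this PD_right_dual_le[OF P]]
  show "f $ Inr y = ?w" .
qed

lemma join_vec_in_TD:
  assumes g: "g = left_dual D h" and h: "h = right_dual D g"
  shows "join_vec g h \<in> TD D"
proof -
  have P: "join_vec g h \<in> PD D"
    unfolding PD_def
  proof (intro CollectI conjI allI)
    fix i show "0 \<le> join_vec g h $ i"
      using g h left_dual_nonneg[of D h] right_dual_nonneg[of D g] by (cases i) auto
    fix x y show "D x y \<le> join_vec g h $ Inl x + join_vec g h $ Inr y"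
      using g left_dual_ge[of D x y h] by auto
  qed
  have "f = join_vec g h" if f: "f \<in> PD D" and le: "\<forall>i. f $ i \<le> join_vec g h $ i" for f
  proof -
    have "g x \<le> f $ Inl x" for x
    proof -
      have "left_dual D h x \<le> left_dual D (\<lambda>y. f $ Inr y) x"
        using le by (intro left_dual_antimono) (metis join_vec_Inr)
      then show ?thesis using g PD_left_dual_le[OF f, of x] by simp
    qed
    moreover have "h y \<le> f $ Inr y" for y
    proof -
      have "right_dual D g y \<le> right_dual D (\<lambda>x. f $ Inl x) y"
        using le by (intro right_dual_antimono) (metis join_vec_Inl)
      then show ?thesis using h PD_right_dual_le[OF f, of y] by simp
    qed
    ultimately have "join_vec g h $ i \<le> f $ i" for i
      by (cases i) simp_all
    then show ?thesis
      using le by (simp add: vec_eq_iff antisym)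
  qed
  with P show ?thesis by (auto simp: TD_def)
qed

lemma left_dual_right_dual_left_dual:
  assumes "\<And>y. 0 \<le> h y"
  shows "left_dual D (right_dual D (left_dual D h)) = left_dual D h"
proof (rule ext, rule antisym)
  fix x
  show "left_dual D (right_dual D (left_dual D h)) x \<le> left_dual D h x"
  proof (rule left_dual_le)
    show "D x y - right_dual D (left_dual D h) y \<le> left_dual D h x" for y
      using right_dual_ge[of D x y "left_dual D h"] by linarith
  qed (rule left_dual_nonneg)
  have "right_dual D (left_dual D h) y \<le> h y" for y
    by (rule right_dual_le) (use assms left_dual_ge[of D _ y h] in \<open>auto simp: algebra_simps\<close>)
  then show "left_dual D h x \<le> left_dual D (right_dual D (left_dual D h)) x"
    by (rule left_dual_antimono)
qed

lemma join_vec_duals_in_TD: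
  "(\<And>y. 0 \<le> h y) \<Longrightarrow> join_vec (left_dual D h) (right_dual D (left_dual D h)) \<in> TD D"
  by (rule join_vec_in_TD) (simp_all add: left_dual_right_dual_left_dual)

section \<open>Convex chains are collinear\<close>

lemma opposite_signs_shift:
  fixes a b c :: real
  assumes "a \<noteq> 0" and "c \<noteq> 0"
  shows "\<exists>\<mu>. (\<mu> * a < 0 \<and> 0 < c + \<mu> * b) \<or> (0 < \<mu> * a \<and> c + \<mu> * b < 0)"
proof -
  define \<theta> where "\<theta> = 1 / (2 * (\<bar>a * b\<bar> + 1))"
  have \<theta>: "0 < \<theta>" "\<theta> * \<bar>a * b\<bar> < 1"
    by (simp_all add: \<theta>_def field_simps)
  define P Q where "P = a * a * \<theta>" and "Q = 1 - \<theta> * (a * b)"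
  have "\<theta> * (a * b) \<le> \<theta> * \<bar>a * b\<bar>"
    using \<theta>(1) by (intro mult_left_mono) auto
  then have "0 < Q"
    using \<theta>(2) by (simp add: Q_def)
  moreover have "0 < P"
    using assms(1) \<theta>(1) by (auto simp: P_def zero_less_mult_iff linorder_neq_iff)
  moreover have "(- c * a * \<theta>) * a = - (c * P)" and "c + (- c * a * \<theta>) * b = c * Q"
    by (simp_all add: P_def Q_def algebra_simps)
  moreover have "0 < c \<or> c < 0"
    using assms(2) by linarith
  ultimately show ?thesis
    by (metis mult_pos_pos mult_neg_pos neg_less_0_iff_less neg_0_less_iff_less)
qed

lemma comparable_translates_parallel:
  fixes u v :: "real ^ 'n"
  assumes u: "u \<noteq> 0" and cmp: "\<And>k. 0 \<le> v + k *\<^sub>R u \<or> v + k *\<^sub>R u \<le> 0"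
  shows "\<exists>l. v = l *\<^sub>R u"
proof -
  obtain i where ui: "u $ i \<noteq> 0" using u by (metis vec_eq_iff zero_index)
  define l where "l = v $ i / u $ i"
  define w where "w = v - l *\<^sub>R u"
  have wi: "w $ i = 0" using ui by (simp add: w_def l_def)
  have "w = 0"
  proof (rule ccontr)
    assume "w \<noteq> 0"
    then obtain j where wj: "w $ j \<noteq> 0" by (metis vec_eq_iff zero_index)
    obtain \<mu> where \<mu>: "(\<mu> * u $ i < 0 \<and> 0 < w $ j + \<mu> * u $ j) \<or> (0 < \<mu> * u $ i \<and> w $ j + \<mu> * u $ j < 0)"
      using opposite_signs_shift[OF ui wj] by blast
    have "v + (\<mu> - l) *\<^sub>R u = w + \<mu> *\<^sub>R u" by (simp add: w_def algebra_simps)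
    then have "0 \<le> w + \<mu> *\<^sub>R u \<or> w + \<mu> *\<^sub>R u \<le> 0" using cmp[of "\<mu> - l"] by simp
    then have "(0 \<le> (w + \<mu> *\<^sub>R u) $ i \<and> 0 \<le> (w + \<mu> *\<^sub>R u) $ j) \<or>
        ((w + \<mu> *\<^sub>R u) $ i \<le> 0 \<and> (w + \<mu> *\<^sub>R u) $ j \<le> 0)"
      by (auto simp: less_eq_vec_def)
    with \<mu> wi show False by auto
  qed
  then show ?thesis by (auto simp: w_def)
qed

lemma convex_chain_translates_comparable:
  fixes S :: "(real ^ 'n) set"
  assumes cvx: "convex S" and chain: "\<And>p q. p \<in> S \<Longrightarrow> q \<in> S \<Longrightarrow> p \<le> q \<or> q \<le> p"
    and S: "p \<in> S" "q \<in> S" "r \<in> S"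
  shows "0 \<le> r - p + k *\<^sub>R (q - p) \<or> r - p + k *\<^sub>R (q - p) \<le> 0"
proof -
  define d where "d = 1 / (\<bar>k\<bar> + 1)"
  have d: "0 < d" "d * \<bar>k\<bar> + d = 1" by (simp_all add: d_def field_simps)
  have tri: "p + a *\<^sub>R (q - p) + b *\<^sub>R (r - p) \<in> S" if "0 \<le> a" "0 \<le> b" "a + b \<le> 1" for a b
  proof -
    have "convex hull {p, q, r} \<subseteq> S" using cvx S by (intro hull_minimal) auto
    then show ?thesis using that unfolding convex_hull_3_alt by blast
  qed
  obtain x x' where "x \<in> S" "x' \<in> S" "x' - x = d *\<^sub>R (r - p + k *\<^sub>R (q - p))"
  proof (cases "0 \<le> k")
    case True
    have "p + (d * k) *\<^sub>R (q - p) + d *\<^sub>R (r - p) \<in> S"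
      using True d by (intro tri) (auto simp: abs_of_nonneg)
    then show thesis
      by (rule that[OF S(1)]) (simp add: algebra_simps)
  next
    case False
    have "p + (- d * k) *\<^sub>R (q - p) + 0 *\<^sub>R (r - p) \<in> S"
      using False d by (intro tri) (auto simp: abs_of_neg mult_nonneg_nonpos)
    moreover have "p + 0 *\<^sub>R (q - p) + d *\<^sub>R (r - p) \<in> S"
      using False d mult_pos_neg[of d k] by (intro tri) (auto simp: abs_of_neg)
    ultimately show thesis
      by (rule that) (simp add: algebra_simps)
  qed
  then have "0 \<le> d *\<^sub>R (r - p + k *\<^sub>R (q - p)) \<or> d *\<^sub>R (r - p + k *\<^sub>R (q - p)) \<le> 0"
    using chain by (metis diff_ge_0_iff_ge diff_le_0_iff_le)
  then show ?thesis
    using d(1) by (auto simp: less_eq_vec_def zero_le_mult_iff mult_le_0_iff)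
qed

lemma convex_chain_collinear:
  fixes S :: "(real ^ 'n) set"
  assumes cvx: "convex S" and chain: "\<And>p q. p \<in> S \<Longrightarrow> q \<in> S \<Longrightarrow> p \<le> q \<or> q \<le> p"
  shows "collinear S"
proof (cases "\<exists>p\<in>S. \<exists>q\<in>S. p \<noteq> q")
  case False
  then show ?thesis unfolding collinear_def by (intro exI[of _ 0]) auto
next
  case True
  then obtain p q where S: "p \<in> S" "q \<in> S" and pq: "p \<noteq> q" by blast
  have parallel: "\<exists>l. r - p = l *\<^sub>R (q - p)" if "r \<in> S" for r
    using pq convex_chain_translates_comparable[OF cvx chain S that]
    by (intro comparable_translates_parallel) auto
  show ?thesis unfolding collinear_def
  proof (intro exI[of _ "q - p"] ballI)
    fix x y assume "x \<in> S" "y \<in> S"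
    then obtain lx ly where l: "x - p = lx *\<^sub>R (q - p)" "y - p = ly *\<^sub>R (q - p)" using parallel by blast
    have "x - y = (x - p) - (y - p)" by simp
    also have "\<dots> = (lx - ly) *\<^sub>R (q - p)" unfolding l by (simp add: scaleR_diff_left)
    finally show "\<exists>c. x - y = c *\<^sub>R (q - p)" by blast
  qed
qed

lemma collinear_linear_image:
  assumes "collinear S" and "linear f"
  shows "collinear (f ` S)"
proof -
  obtain u where u: "\<And>x y. x \<in> S \<Longrightarrow> y \<in> S \<Longrightarrow> \<exists>c. x - y = c *\<^sub>R u"
    using assms(1) unfolding collinear_def by blast
  have "\<exists>c. f x - f y = c *\<^sub>R f u" if "x \<in> S" "y \<in> S" for x y
    using u[OF that] linear_diff[OF assms(2)] linear_scale[OF assms(2)] by metis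
  then show ?thesis unfolding collinear_def by blast
qed

lemma collinear_coordinate_zero:
  fixes p q r :: "real ^ 'n"
  assumes "collinear {p, q, r}" and "p \<noteq> q" and "(q - p) $ i = 0"
  shows "(r - q) $ i = 0"
proof -
  obtain u where u: "\<And>x y. x \<in> {p, q, r} \<Longrightarrow> y \<in> {p, q, r} \<Longrightarrow> \<exists>a. x - y = a *\<^sub>R u"
    using assms(1) unfolding collinear_def by blast
  obtain a b where a: "q - p = a *\<^sub>R u" and b: "r - q = b *\<^sub>R u"
    using u[of q p] u[of r q] by blast
  have "a \<noteq> 0" using a assms(2) by auto
  then have "u $ i = 0" using a assms(3) by simp
  then show ?thesis using b by simp
qed

lemma convex_hull_affine_triangle:
  assumes "0 \<le> \<epsilon>" and P: "\<And>s t. 0 \<le> s \<Longrightarrow> s \<le> t \<Longrightarrow> t \<le> \<epsilon> \<Longrightarrow> P s t = A + s *\<^sub>R B + t *\<^sub>R C"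
  shows "convex hull {P 0 0, P 0 \<epsilon>, P \<epsilon> \<epsilon>} \<subseteq> {P s t | s t. 0 \<le> s \<and> s \<le> t \<and> t \<le> \<epsilon>}"
proof
  fix x assume "x \<in> convex hull {P 0 0, P 0 \<epsilon>, P \<epsilon> \<epsilon>}"
  then obtain u v where uv: "0 \<le> u" "0 \<le> v" "u + v \<le> 1"
    and x: "x = P 0 0 + u *\<^sub>R (P 0 \<epsilon> - P 0 0) + v *\<^sub>R (P \<epsilon> \<epsilon> - P 0 0)"
    unfolding convex_hull_3_alt by blast
  have st: "0 \<le> v * \<epsilon>" "v * \<epsilon> \<le> (u + v) * \<epsilon>" "(u + v) * \<epsilon> \<le> \<epsilon>"
    using uv assms(1) mult_right_mono[of "u + v" 1 \<epsilon>] by (simp_all add: mult_right_mono)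
  have "P 0 0 = A" "P 0 \<epsilon> = A + \<epsilon> *\<^sub>R C" "P \<epsilon> \<epsilon> = A + \<epsilon> *\<^sub>R B + \<epsilon> *\<^sub>R C"
    using P[of 0 0] P[of 0 \<epsilon>] P[of \<epsilon> \<epsilon>] assms(1) by simp_all
  moreover have "P (v * \<epsilon>) ((u + v) * \<epsilon>) = A + (v * \<epsilon>) *\<^sub>R B + ((u + v) * \<epsilon>) *\<^sub>R C"
    using st by (rule P)
  ultimately have "x = P (v * \<epsilon>) ((u + v) * \<epsilon>)"
    unfolding x by (simp add: algebra_simps)
  with st show "x \<in> {P s t | s t. 0 \<le> s \<and> s \<le> t \<and> t \<le> \<epsilon>}" by blast
qed

section \<open>Interval distances have one-dimensional tight spans\<close>

definition negate_right :: "real ^ ('a::finite + 'a) \<Rightarrow> real ^ ('a + 'a)" where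
  "negate_right f = (\<chi> i. case i of Inl x \<Rightarrow> f $ Inl x | Inr y \<Rightarrow> - f $ Inr y)"

lemma linear_negate_right: "linear negate_right"
  by (rule linearI) (auto simp: negate_right_def vec_eq_iff split: sum.split)

lemma negate_right_negate_right [simp]: "negate_right (negate_right f) = f"
  by (simp add: negate_right_def vec_eq_iff split: sum.split)

lemma negate_right_le_iff:
  "negate_right f \<le> negate_right f' \<longleftrightarrow> (\<forall>x. f $ Inl x \<le> f' $ Inl x) \<and> (\<forall>y. f' $ Inr y \<le> f $ Inr y)"
  by (auto simp: negate_right_def less_eq_vec_def split: sum.split)

lemma convex_negate_right_chain_collinear:
  assumes "convex S" and "\<And>f f'. f \<in> S \<Longrightarrow> f' \<in> S \<Longrightarrow> negate_right f \<le> negate_right f' \<or> negate_right f' \<le> negate_right f"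
  shows "collinear S"
proof -
  have "collinear (negate_right ` S)"
    using assms by (intro convex_chain_collinear convex_linear_image linear_negate_right) auto
  then have "collinear (negate_right ` negate_right ` S)"
    by (rule collinear_linear_image[OF _ linear_negate_right])
  then show ?thesis by (simp add: image_image)
qed

lemma TD_interval_form_left:
  assumes f: "f \<in> TD D" and D: "\<And>x y. D x y = max 0 (a y - b x)"
  shows "f $ Inl x = max 0 ((MAX y. a y - f $ Inr y) - b x)"
proof -
  define C where "C = (MAX y. a y - f $ Inr y)"
  have "left_dual D (\<lambda>y. f $ Inr y) x = max 0 (C - b x)"
  proof (rule antisym)
    show "left_dual D (\<lambda>y. f $ Inr y) x \<le> max 0 (C - b x)"
    proof (rule left_dual_le)
      fix y
      have "a y - f $ Inr y \<le> C" unfolding C_def by (rule Max_range_ge)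
      moreover have "0 \<le> f $ Inr y" using f by (simp add: TD_def PD_def)
      ultimately show "D x y - f $ Inr y \<le> max 0 (C - b x)" unfolding D by linarith
    qed simp
    obtain y0 where "C = a y0 - f $ Inr y0"
      unfolding C_def using Max_range_attained by blast
    then have "C - b x \<le> left_dual D (\<lambda>y. f $ Inr y) x"
      using left_dual_ge[of D x y0 "\<lambda>y. f $ Inr y"] D[of x y0] by linarith
    then show "max 0 (C - b x) \<le> left_dual D (\<lambda>y. f $ Inr y) x"
      using left_dual_nonneg by simp
  qed
  then show ?thesis using TD_fixed_point(1)[OF f, of x] by (simp add: C_def)
qed

lemma TD_chain_if_interval_form:
  assumes f: "f \<in> TD D" and f': "f' \<in> TD D" and D: "\<And>x y. D x y = max 0 (a y - b x)"
  shows "negate_right f \<le> negate_right f' \<or> negate_right f' \<le> negate_right f"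
proof -
  have mono: "negate_right g \<le> negate_right g'"
    if g: "g \<in> TD D" and g': "g' \<in> TD D" and le: "\<And>x. g $ Inl x \<le> g' $ Inl x" for g g'
  proof -
    have "g' $ Inr y \<le> g $ Inr y" for y
      unfolding TD_fixed_point(2)[OF g, of y] TD_fixed_point(2)[OF g', of y]
      by (rule right_dual_antimono) (rule le)
    with le show ?thesis by (simp add: negate_right_le_iff)
  qed
  define C C' where "C = (MAX y. a y - f $ Inr y)" and "C' = (MAX y. a y - f' $ Inr y)"
  have "f $ Inl x = max 0 (C - b x)" "f' $ Inl x = max 0 (C' - b x)" for x
    unfolding C_def C'_def by (intro TD_interval_form_left[OF _ D] f f')+
  then have "(\<forall>x. f $ Inl x \<le> f' $ Inl x) \<or> (\<forall>x. f' $ Inl x \<le> f $ Inl x)"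
    by (cases "C \<le> C'") auto
  with mono[OF f f'] mono[OF f' f] show ?thesis by blast
qed

theorem interval_form_tight_span_is_tree:
  assumes "\<And>x y. D x y = max 0 (a y - b x)"
  shows "tight_span_is_tree D"
  unfolding tight_span_is_tree_def
proof (intro allI impI)
  fix S assume S: "convex S \<and> S \<subseteq> TD D"
  have "collinear S"
  proof (rule convex_negate_right_chain_collinear)
    fix f f' assume "f \<in> S" "f' \<in> S"
    with S show "negate_right f \<le> negate_right f' \<or> negate_right f' \<le> negate_right f"
      by (intro TD_chain_if_interval_form[OF _ _ assms]) auto
  qed (use S in blast)
  then show "aff_dim S \<le> 1" by (simp add: collinear_aff_dim)
qed

section \<open>Nested truncations give interval distances\<close>

definition truncation :: "('a \<Rightarrow> 'a \<Rightarrow> real) \<Rightarrow> 'a \<Rightarrow> real \<Rightarrow> 'a \<Rightarrow> real" where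
  "truncation D y c z = max 0 (D z y - c)"

lemma truncation_antimono: "c \<le> c' \<Longrightarrow> truncation D y c' z \<le> truncation D y c z"
  by (simp add: truncation_def)

lemma truncation_shift:
  "0 \<le> s \<Longrightarrow> s \<le> truncation D y c z \<Longrightarrow> truncation D y (c + s) z = truncation D y c z - s"
  by (auto simp: truncation_def max_def)

definition truncations_nested :: "('a \<Rightarrow> 'a \<Rightarrow> real) \<Rightarrow> bool" where
  "truncations_nested D \<longleftrightarrow> (\<forall>y w c d. 0 \<le> c \<longrightarrow> 0 \<le> d \<longrightarrow>
     truncation D y c \<le> truncation D w d \<or> truncation D w d \<le> truncation D y c)"

definition interval_lo :: "('a::finite \<Rightarrow> 'a \<Rightarrow> real) \<Rightarrow> 'a \<Rightarrow> real" where
  "interval_lo D y = (MAX z. D z y)"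

definition interval_hi :: "('a::finite \<Rightarrow> 'a \<Rightarrow> real) \<Rightarrow> 'a \<Rightarrow> real" where
  "interval_hi D x = (MAX z. MAX w. D z w - D x w)"

lemma interval_hi_ge: "D z w - D x w \<le> interval_hi D x"
  unfolding interval_hi_def
  using Max_range_ge[of "\<lambda>w. D z w - D x w" w] Max_range_ge[of "\<lambda>z. MAX w. D z w - D x w" z]
  by linarith

lemma interval_lo_le_hi:
  assumes "directed_distance D"
  shows "interval_lo D x \<le> interval_hi D x"
proof -
  obtain z where "interval_lo D x = D z x"
    unfolding interval_lo_def using Max_range_attained by blast
  then show ?thesis
    using interval_hi_ge[of D z x x] assms by (simp add: directed_distance_def)
qed

lemma truncations_nested_shift_bound:
  assumes dd: "directed_distance D" and nested: "truncations_nested D" and pos: "0 < D x y"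
  shows "D z w - D x w \<le> max 0 (D z y - D x y)"
proof (rule ccontr)
  assume "\<not> ?thesis"
  then have gap: "0 < D z w - D x w - max 0 (D z y - D x y)" by linarith
  define e where "e = min (D x y) (D z w - D x w - max 0 (D z y - D x y)) / 2"
  have e: "0 < e" "e < D x y" "e < D z w - D x w - max 0 (D z y - D x y)"
    using pos gap by (auto simp: e_def min_def)
  have "0 \<le> D x w" using dd by (simp add: directed_distance_def)
  \<comment> \<open>At x the first truncation below is positive and the second vanishes; comparing them at z gives the contradiction.\<close>
  with nested e have "truncation D y (D x y - e) \<le> truncation D w (D x w) \<or>
      truncation D w (D x w) \<le> truncation D y (D x y - e)"
    unfolding truncations_nested_def by simp
  then show False
  proof
    assume "truncation D y (D x y - e) \<le> truncation D w (D x w)"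
    then have "truncation D y (D x y - e) x \<le> truncation D w (D x w) x" by (rule le_funD)
    with e show False by (simp add: truncation_def)
  next
    assume "truncation D w (D x w) \<le> truncation D y (D x y - e)"
    then have "D z w - D x w \<le> max 0 (D z y - D x y + e)"
      by (auto dest: le_funD[of _ _ z] simp: truncation_def)
    moreover have "max 0 (D z y - D x y + e) \<le> max 0 (D z y - D x y) + e"
      using e(1) by simp
    ultimately show False using e(3) by linarith
  qed
qed

lemma truncations_nested_interval_form:
  assumes dd: "directed_distance D" and nested: "truncations_nested D"
  shows "D x y = max 0 (interval_lo D y - interval_hi D x)"
proof -
  obtain z0 where z0: "interval_lo D y = D z0 y"
    unfolding interval_lo_def using Max_range_attained by blast
  have le: "interval_lo D y - interval_hi D x \<le> D x y"
    using z0 interval_hi_ge[of D z0 y x] by linarith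
  show ?thesis
  proof (cases "D x y = 0")
    case True
    then show ?thesis using le by simp
  next
    case False
    then have pos: "0 < D x y" using dd by (simp add: directed_distance_def less_le)
    obtain z where z: "interval_hi D x = (MAX w. D z w - D x w)"
      unfolding interval_hi_def using Max_range_attained by blast
    obtain w where "(MAX w. D z w - D x w) = D z w - D x w"
      using Max_range_attained by blast
    with z have "interval_hi D x = D z w - D x w" by simp
    then have "interval_hi D x \<le> max 0 (D z y - D x y)"
      using truncations_nested_shift_bound[OF dd nested pos] by simp
    moreover have "D z y \<le> interval_lo D y" "D x y \<le> interval_lo D y"
      unfolding interval_lo_def by (rule Max_range_ge)+
    ultimately show ?thesis using le pos by linarith
  qed
qed

section \<open>Maxima of affine functions near a corner\<close>

definition near_origin :: "(real \<Rightarrow> real \<Rightarrow> bool) \<Rightarrow> bool" where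
  "near_origin P \<longleftrightarrow> (\<forall>\<^sub>F \<epsilon> in at_right 0. \<forall>s t. 0 \<le> s \<longrightarrow> s \<le> t \<longrightarrow> t \<le> \<epsilon> \<longrightarrow> P s t)"

lemma near_origin_mono:
  assumes "near_origin P" and "\<And>s t. 0 \<le> s \<Longrightarrow> s \<le> t \<Longrightarrow> P s t \<Longrightarrow> Q s t"
  shows "near_origin Q"
  using assms unfolding near_origin_def by (auto elim: eventually_mono)

lemma near_origin_conj:
  "near_origin P \<Longrightarrow> near_origin Q \<Longrightarrow> near_origin (\<lambda>s t. P s t \<and> Q s t)"
  unfolding near_origin_def by (erule (1) eventually_elim2) blast

lemma near_origin_ball:
  assumes "finite I" and "\<And>i. i \<in> I \<Longrightarrow> near_origin (P i)"
  shows "near_origin (\<lambda>s t. \<forall>i\<in>I. P i s t)"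
proof -
  have "\<forall>\<^sub>F \<epsilon> in at_right 0. \<forall>i\<in>I. \<forall>s t. 0 \<le> s \<longrightarrow> s \<le> t \<longrightarrow> t \<le> \<epsilon> \<longrightarrow> P i s t"
    by (rule eventually_ball_finite[OF assms(1)]) (use assms(2) in \<open>simp add: near_origin_def\<close>)
  then show ?thesis
    unfolding near_origin_def by (rule eventually_mono) blast
qed

lemma near_origin_all:
  fixes P :: "'i::finite \<Rightarrow> real \<Rightarrow> real \<Rightarrow> bool"
  assumes "\<And>i. near_origin (P i)"
  shows "near_origin (\<lambda>s t. \<forall>i. P i s t)"
  using near_origin_ball[of UNIV P] assms by simp

lemma near_origin_witness:
  assumes "near_origin P" and "0 < B"
  obtains \<epsilon> where "0 < \<epsilon>" "\<epsilon> < B" "\<And>s t. 0 \<le> s \<Longrightarrow> s \<le> t \<Longrightarrow> t \<le> \<epsilon> \<Longrightarrow> P s t"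
proof -
  have "\<forall>\<^sub>F \<epsilon> in at_right 0. \<epsilon> < B"
    using assms(2) by (auto simp: eventually_at_right_field)
  with assms(1) eventually_at_right_less[of 0]
  have "\<forall>\<^sub>F \<epsilon> in at_right 0. 0 < \<epsilon> \<and> \<epsilon> < B \<and> (\<forall>s t. 0 \<le> s \<longrightarrow> s \<le> t \<longrightarrow> t \<le> \<epsilon> \<longrightarrow> P s t)"
    unfolding near_origin_def by eventually_elim blast
  then obtain \<epsilon> where "0 < \<epsilon> \<and> \<epsilon> < B \<and> (\<forall>s t. 0 \<le> s \<longrightarrow> s \<le> t \<longrightarrow> t \<le> \<epsilon> \<longrightarrow> P s t)"
    using eventually_happens' trivial_limit_at_right_real by blast
  with that show thesis by blast
qed

lemma near_origin_small:
  assumes "0 < K"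
  shows "near_origin (\<lambda>s t. p * s + q * t \<le> K)"
  unfolding near_origin_def eventually_at_right_field
proof (intro exI conjI allI impI)
  define e where "e = K / (\<bar>p\<bar> + \<bar>q\<bar> + 1)"
  show "0 < e" using assms by (simp add: e_def add_nonneg_pos)
  fix \<epsilon> s t :: real
  assume "0 < \<epsilon>" "\<epsilon> < e" and st: "0 \<le> s" "s \<le> t" "t \<le> \<epsilon>"
  have "p * s \<le> \<bar>p\<bar> * s" "\<bar>p\<bar> * s \<le> \<bar>p\<bar> * \<epsilon>"
    using st by (auto intro: mult_right_mono mult_left_mono)
  moreover have "q * t \<le> \<bar>q\<bar> * t" "\<bar>q\<bar> * t \<le> \<bar>q\<bar> * \<epsilon>"
    using st by (auto intro: mult_right_mono mult_left_mono)
  moreover have "(\<bar>p\<bar> + \<bar>q\<bar> + 1) * \<epsilon> < K"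
    using \<open>\<epsilon> < e\<close> by (simp add: e_def field_simps add_nonneg_pos)
  ultimately show "p * s + q * t \<le> K"
    using \<open>0 < \<epsilon>\<close> by (simp add: algebra_simps)
qed

definition cone_le :: "real \<times> real \<Rightarrow> real \<times> real \<Rightarrow> bool" where
  "cone_le \<sigma> \<tau> \<longleftrightarrow> snd \<sigma> \<le> snd \<tau> \<and> fst \<sigma> + snd \<sigma> \<le> fst \<tau> + snd \<tau>"

lemma cone_le_on_cone:
  assumes "cone_le \<sigma> \<tau>" and "0 \<le> s" and "s \<le> t"
  shows "fst \<sigma> * s + snd \<sigma> * t \<le> fst \<tau> * s + snd \<tau> * t"
proof -
  have "(fst \<sigma> + snd \<sigma>) * s \<le> (fst \<tau> + snd \<tau>) * s" "snd \<sigma> * (t - s) \<le> snd \<tau> * (t - s)"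
    using assms unfolding cone_le_def by (auto intro: mult_right_mono)
  then show ?thesis by (simp add: algebra_simps)
qed

definition slopes_chain :: "(real \<times> real) set \<Rightarrow> bool" where
  "slopes_chain K \<longleftrightarrow> (\<forall>\<sigma>\<in>K. \<forall>\<tau>\<in>K. cone_le \<sigma> \<tau> \<or> cone_le \<tau> \<sigma>)"

lemma slopes_chain_subset: "slopes_chain K \<Longrightarrow> K' \<subseteq> K \<Longrightarrow> slopes_chain K'"
  unfolding slopes_chain_def by blast

lemma slopes_chain_descending: "slopes_chain {(0, 0), (-1, 0), (0, -1)}"
  by (simp add: slopes_chain_def cone_le_def)

lemma slopes_chain_ascending: "slopes_chain {(0, 0), (1, 0), (0, 1)}"
  by (simp add: slopes_chain_def cone_le_def)

lemma dominant_affine_near_origin: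
  fixes a :: "'i \<Rightarrow> real" and \<sigma> :: "'i \<Rightarrow> real \<times> real"
  assumes fin: "finite I" and ne: "I \<noteq> {}" and chain: "slopes_chain (\<sigma> ` I)"
  shows "\<exists>i0\<in>I. near_origin (\<lambda>s t. \<forall>i\<in>I.
           a i + fst (\<sigma> i) * s + snd (\<sigma> i) * t \<le> a i0 + fst (\<sigma> i0) * s + snd (\<sigma> i0) * t)"
proof -
  define A where "A = Max (a ` I)"
  define M where "M = {i\<in>I. a i = A}"
  have "A \<in> a ` I" unfolding A_def using fin ne by (intro Max_in) auto
  then have M: "finite M" "M \<noteq> {}" using fin by (auto simp: M_def)
  \<comment> \<open>Among the maximal constant terms, the slope maximising 2 snd + fst is the top of the chain.\<close>
  define \<phi> where "\<phi> i = 2 * snd (\<sigma> i) + fst (\<sigma> i)" for i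
  obtain i0 where i0M: "i0 \<in> M" and \<phi>max: "\<And>i. i \<in> M \<Longrightarrow> \<phi> i \<le> \<phi> i0"
    using Max_in[of "\<phi> ` M"] M by (metis (no_types, lifting) Max_ge finite_imageI image_iff image_is_empty)
  have i0: "i0 \<in> I" "a i0 = A" using i0M by (auto simp: M_def)
  have top: "cone_le (\<sigma> i) (\<sigma> i0)" if "i \<in> M" for i
    using chain i0(1) \<phi>max[OF that] that unfolding slopes_chain_def cone_le_def \<phi>_def M_def
    by (smt (verit) image_eqI mem_Collect_eq)
  have "near_origin (\<lambda>s t. \<forall>i\<in>I - M.
          (fst (\<sigma> i) - fst (\<sigma> i0)) * s + (snd (\<sigma> i) - snd (\<sigma> i0)) * t \<le> A - a i)"
  proof (rule near_origin_ball)
    fix i assume "i \<in> I - M"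
    then have "a i < A" using fin by (auto simp: M_def A_def less_le)
    then show "near_origin (\<lambda>s t. (fst (\<sigma> i) - fst (\<sigma> i0)) * s + (snd (\<sigma> i) - snd (\<sigma> i0)) * t \<le> A - a i)"
      by (intro near_origin_small) simp
  qed (use fin in simp)
  then have "near_origin (\<lambda>s t. \<forall>i\<in>I.
      a i + fst (\<sigma> i) * s + snd (\<sigma> i) * t \<le> a i0 + fst (\<sigma> i0) * s + snd (\<sigma> i0) * t)"
  proof (rule near_origin_mono, intro ballI)
    fix s t i assume st: "0 \<le> s" "s \<le> t" and iI: "i \<in> I"
      and small: "\<forall>i\<in>I - M. (fst (\<sigma> i) - fst (\<sigma> i0)) * s + (snd (\<sigma> i) - snd (\<sigma> i0)) * t \<le> A - a i"
    show "a i + fst (\<sigma> i) * s + snd (\<sigma> i) * t \<le> a i0 + fst (\<sigma> i0) * s + snd (\<sigma> i0) * t"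
    proof (cases "i \<in> M")
      case True
      then show ?thesis using cone_le_on_cone[OF top[OF True] st] i0 by (simp add: M_def)
    next
      case False
      then show ?thesis using small iI i0 by (auto simp: algebra_simps)
    qed
  qed
  with i0 show ?thesis by blast
qed

lemma max0_Max_eqI:
  fixes f :: "'i::finite \<Rightarrow> real"
  assumes "0 \<le> v" and "\<And>i. f i \<le> v" and "v = 0 \<or> (\<exists>i. f i = v)"
  shows "max 0 (MAX i. f i) = v"
proof -
  have "(MAX i. f i) \<le> v" by (rule Max_range_le) (rule assms(2))
  moreover have "v = 0 \<or> v \<le> (MAX i. f i)" using assms(3) Max_range_ge[of f] by auto
  ultimately show ?thesis using assms(1) by linarith
qed

lemma max0_Max_affine_near_origin:
  fixes \<alpha> :: "'i::finite \<Rightarrow> real" and \<sigma> :: "'i \<Rightarrow> real \<times> real"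
  assumes chain: "slopes_chain (insert (0, 0) (range \<sigma>))"
  shows "\<exists>A. \<exists>\<tau>\<in>insert (0, 0) (range \<sigma>).
           near_origin (\<lambda>s t. max 0 (MAX i. \<alpha> i + fst (\<sigma> i) * s + snd (\<sigma> i) * t) = A + fst \<tau> * s + snd \<tau> * t)"
proof -
  define a where "a i = (case i of None \<Rightarrow> 0 | Some j \<Rightarrow> \<alpha> j)" for i
  define \<sigma>' where "\<sigma>' i = (case i of None \<Rightarrow> (0, 0) | Some j \<Rightarrow> \<sigma> j)" for i
  define v where "v i s t = a i + fst (\<sigma>' i) * s + snd (\<sigma>' i) * t" for i s t
  have "\<sigma>' ` UNIV = insert (0, 0) (range \<sigma>)"
    by (simp add: UNIV_option_conv \<sigma>'_def image_image)
  then obtain i0 where i0: "near_origin (\<lambda>s t. \<forall>i. v i s t \<le> v i0 s t)"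
    using dominant_affine_near_origin[of UNIV \<sigma>' a] chain by (auto simp: v_def)
  have "near_origin (\<lambda>s t. max 0 (MAX j. \<alpha> j + fst (\<sigma> j) * s + snd (\<sigma> j) * t) = v i0 s t)"
  proof (rule near_origin_mono[OF i0], rule max0_Max_eqI)
    fix s t assume le: "\<forall>i. v i s t \<le> v i0 s t"
    show "0 \<le> v i0 s t" using le[rule_format, of None] by (simp add: v_def a_def \<sigma>'_def)
    show "\<alpha> j + fst (\<sigma> j) * s + snd (\<sigma> j) * t \<le> v i0 s t" for j
      using le[rule_format, of "Some j"] by (simp add: v_def a_def \<sigma>'_def)
    show "v i0 s t = 0 \<or> (\<exists>j. \<alpha> j + fst (\<sigma> j) * s + snd (\<sigma> j) * t = v i0 s t)"
      by (cases i0) (auto simp: v_def a_def \<sigma>'_def)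
  qed
  moreover have "\<sigma>' i0 \<in> insert (0, 0) (range \<sigma>)"
    by (cases i0) (auto simp: \<sigma>'_def)
  ultimately show ?thesis unfolding v_def by blast
qed

section \<open>One-dimensional tight spans force nested truncations\<close>

lemma sup_truncations_left_dual:
  fixes D :: "'a::finite \<Rightarrow> 'a \<Rightarrow> real"
  assumes "y \<noteq> w" and "0 \<le> c" and "0 \<le> d"
  obtains h where "\<And>v. 0 \<le> h v" and "left_dual D h = sup (truncation D y c) (truncation D w d)"
proof
  define M where "M = max 0 (MAX z. MAX v. D z v)"
  have M: "D z v \<le> M" for z v
    unfolding M_def using Max_range_ge[of "D z" v] Max_range_ge[of "\<lambda>z. MAX v. D z v" z] by linarith
  define h where "h v = (if v = y then c else if v = w then d else M)" for v
  show "0 \<le> h v" for v using assms by (simp add: h_def M_def)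
  show "left_dual D h = sup (truncation D y c) (truncation D w d)"
  proof (rule ext, rule antisym)
    fix z
    show "left_dual D h z \<le> sup (truncation D y c) (truncation D w d) z"
    proof (rule left_dual_le)
      show "D z v - h v \<le> sup (truncation D y c) (truncation D w d) z" for v
        using assms(1) M[of z v] by (auto simp: h_def truncation_def sup_max)
    qed (simp add: truncation_def sup_max)
    have "D z y - c \<le> left_dual D h z" "D z w - d \<le> left_dual D h z"
      using left_dual_ge[of D z y h] left_dual_ge[of D z w h] assms(1) by (simp_all add: h_def)
    then show "sup (truncation D y c) (truncation D w d) z \<le> left_dual D h z"
      using left_dual_nonneg[of D h z] by (simp add: truncation_def sup_max)
  qed
qed

lemma sup_truncations_in_TD:
  fixes D :: "'a::finite \<Rightarrow> 'a \<Rightarrow> real"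
  assumes "y \<noteq> w" and "0 \<le> c" and "0 \<le> d"
  defines "g \<equiv> sup (truncation D y c) (truncation D w d)"
  shows "join_vec g (right_dual D g) \<in> TD D"
proof -
  obtain h where "\<And>v. 0 \<le> h v" and "left_dual D h = g"
    using sup_truncations_left_dual[OF assms(1-3)] unfolding g_def by blast
  then show ?thesis using join_vec_duals_in_TD[of h D] by simp
qed

lemma sup_truncations_affine_near_origin:
  "\<exists>A. \<exists>\<tau>\<in>{(0, 0), (-1, 0), (0, -1)}.
     near_origin (\<lambda>s t. sup (truncation D y (c + s)) (truncation D w (d + t)) z = A + fst \<tau> * s + snd \<tau> * t)"
proof -
  define \<alpha> where "\<alpha> i = (if i then D z y - c else D z w - d)" for i
  define \<sigma> :: "bool \<Rightarrow> real \<times> real" where "\<sigma> i = (if i then (-1, 0) else (0, -1))" for i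
  have K: "insert (0, 0) (range \<sigma>) = {(0, 0), (-1, 0), (0, -1)}"
    by (auto simp: \<sigma>_def UNIV_bool)
  have "max 0 (MAX i. \<alpha> i + fst (\<sigma> i) * s + snd (\<sigma> i) * t) =
      sup (truncation D y (c + s)) (truncation D w (d + t)) z" for s t
    by (auto simp: UNIV_bool \<alpha>_def \<sigma>_def truncation_def sup_max max_def)
  then show ?thesis
    using max0_Max_affine_near_origin[of \<sigma> \<alpha>] slopes_chain_descending unfolding K by simp
qed

lemma right_dual_affine_near_origin:
  assumes g: "near_origin (\<lambda>s t. \<forall>z. g s t z = A z + fst (\<tau> z) * s + snd (\<tau> z) * t)"
    and \<tau>: "\<And>z. \<tau> z \<in> {(0, 0), (-1, 0), (0, -1)}"
  shows "\<exists>A'. \<exists>\<tau>'\<in>{(0, 0), (1, 0), (0, 1)}.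
           near_origin (\<lambda>s t. right_dual D (g s t) y = A' + fst \<tau>' * s + snd \<tau>' * t)"
proof -
  define \<sigma> where "\<sigma> z = (- fst (\<tau> z), - snd (\<tau> z))" for z
  have "\<sigma> z \<in> {(0, 0), (1, 0), (0, 1)}" for z
    using \<tau>[of z] by (auto simp: \<sigma>_def)
  then have K: "insert (0, 0) (range \<sigma>) \<subseteq> {(0, 0), (1, 0), (0, 1)}"
    by blast
  obtain A' \<tau>' where \<tau>': "\<tau>' \<in> {(0, 0), (1, 0), (0, 1)}" and
    aff: "near_origin (\<lambda>s t. max 0 (MAX z. (D z y - A z) + fst (\<sigma> z) * s + snd (\<sigma> z) * t) = A' + fst \<tau>' * s + snd \<tau>' * t)"
    using max0_Max_affine_near_origin[of \<sigma> "\<lambda>z. D z y - A z"]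
      slopes_chain_subset[OF slopes_chain_ascending K] K by blast
  have "near_origin (\<lambda>s t. right_dual D (g s t) y = A' + fst \<tau>' * s + snd \<tau>' * t)"
    by (rule near_origin_mono[OF near_origin_conj[OF g aff]])
      (simp add: right_dual_def \<sigma>_def algebra_simps)
  with \<tau>' show ?thesis by blast
qed

lemma join_vec_affine_near_origin:
  assumes "\<And>z. \<exists>A. \<exists>\<tau>\<in>{(0, 0), (-1, 0), (0, -1)}. near_origin (\<lambda>s t. g s t z = A + fst \<tau> * s + snd \<tau> * t)"
  shows "\<exists>A B C. near_origin (\<lambda>s t. join_vec (g s t) (right_dual D (g s t)) = A + s *\<^sub>R B + t *\<^sub>R C)"
proof -
  from assms have "\<forall>z. \<exists>A \<tau>. \<tau> \<in> {(0, 0), (-1, 0), (0, -1)} \<and>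
      near_origin (\<lambda>s t. g s t z = A + fst \<tau> * s + snd \<tau> * t)" by blast
  then obtain Al where "\<forall>z. \<exists>\<tau>. \<tau> \<in> {(0, 0), (-1, 0), (0, -1)} \<and>
      near_origin (\<lambda>s t. g s t z = Al z + fst \<tau> * s + snd \<tau> * t)" by (rule choice[THEN exE])
  then obtain \<tau>l where "\<forall>z. \<tau>l z \<in> {(0, 0), (-1, 0), (0, -1)} \<and>
      near_origin (\<lambda>s t. g s t z = Al z + fst (\<tau>l z) * s + snd (\<tau>l z) * t)" by (rule choice[THEN exE])
  then have \<tau>l: "\<And>z. \<tau>l z \<in> {(0, 0), (-1, 0), (0, -1)}"
    and left: "\<And>z. near_origin (\<lambda>s t. g s t z = Al z + fst (\<tau>l z) * s + snd (\<tau>l z) * t)"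
    by blast+
  have left_all: "near_origin (\<lambda>s t. \<forall>z. g s t z = Al z + fst (\<tau>l z) * s + snd (\<tau>l z) * t)"
    by (rule near_origin_all) (rule left)
  have "\<forall>y. \<exists>A \<tau>. near_origin (\<lambda>s t. right_dual D (g s t) y = A + fst \<tau> * s + snd \<tau> * t)"
    using right_dual_affine_near_origin[OF left_all \<tau>l] by blast
  then obtain Ar where "\<forall>y. \<exists>\<tau>. near_origin (\<lambda>s t. right_dual D (g s t) y = Ar y + fst \<tau> * s + snd \<tau> * t)"
    by (rule choice[THEN exE])
  then obtain \<tau>r where
    "\<forall>y. near_origin (\<lambda>s t. right_dual D (g s t) y = Ar y + fst (\<tau>r y) * s + snd (\<tau>r y) * t)"
    by (rule choice[THEN exE])
  then have right: "\<And>y. near_origin (\<lambda>s t. right_dual D (g s t) y = Ar y + fst (\<tau>r y) * s + snd (\<tau>r y) * t)"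
    by blast
  have right_all: "near_origin (\<lambda>s t. \<forall>y. right_dual D (g s t) y = Ar y + fst (\<tau>r y) * s + snd (\<tau>r y) * t)"
    by (rule near_origin_all) (rule right)
  have "near_origin (\<lambda>s t. join_vec (g s t) (right_dual D (g s t)) =
      join_vec Al Ar + s *\<^sub>R join_vec (fst \<circ> \<tau>l) (fst \<circ> \<tau>r) + t *\<^sub>R join_vec (snd \<circ> \<tau>l) (snd \<circ> \<tau>r))"
  proof (rule near_origin_mono[OF near_origin_conj[OF left_all right_all]])
    fix s t
    assume coords: "(\<forall>z. g s t z = Al z + fst (\<tau>l z) * s + snd (\<tau>l z) * t) \<and>
      (\<forall>y. right_dual D (g s t) y = Ar y + fst (\<tau>r y) * s + snd (\<tau>r y) * t)"
    show "join_vec (g s t) (right_dual D (g s t)) =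
      join_vec Al Ar + s *\<^sub>R join_vec (fst \<circ> \<tau>l) (fst \<circ> \<tau>r) + t *\<^sub>R join_vec (snd \<circ> \<tau>l) (snd \<circ> \<tau>r)"
      (is "?lhs = ?rhs")
    proof (rule vec_eq_iff[THEN iffD2], rule allI)
      fix i show "?lhs $ i = ?rhs $ i"
        using coords by (cases i) (simp_all add: algebra_simps)
    qed
  qed
  then show ?thesis by blast
qed

lemma sup_truncations_dominant:
  assumes "truncation D w d z + \<epsilon> < truncation D y c z" and "0 \<le> s" "s \<le> \<epsilon>" "0 \<le> t"
  shows "sup (truncation D y (c + s)) (truncation D w (d + t)) z = truncation D y c z - s"
proof -
  have "0 \<le> truncation D w d z" by (simp add: truncation_def)
  then have "truncation D y (c + s) z = truncation D y c z - s"
    using assms by (intro truncation_shift) auto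
  moreover have "truncation D w (d + t) z \<le> truncation D w d z"
    using assms by (intro truncation_antimono) simp
  ultimately show ?thesis using assms by (simp add: sup_max max_def)
qed

lemma tight_span_is_tree_triangle_collinear:
  assumes tree: "tight_span_is_tree D" and "0 \<le> \<epsilon>"
    and TD: "\<And>s t. 0 \<le> s \<Longrightarrow> s \<le> t \<Longrightarrow> t \<le> \<epsilon> \<Longrightarrow> P s t \<in> TD D"
    and aff: "\<And>s t. 0 \<le> s \<Longrightarrow> s \<le> t \<Longrightarrow> t \<le> \<epsilon> \<Longrightarrow> P s t = A + s *\<^sub>R B + t *\<^sub>R C"
  shows "collinear {P 0 0, P 0 \<epsilon>, P \<epsilon> \<epsilon>}"
proof -
  have "convex hull {P 0 0, P 0 \<epsilon>, P \<epsilon> \<epsilon>} \<subseteq> {P s t | s t. 0 \<le> s \<and> s \<le> t \<and> t \<le> \<epsilon>}"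
    by (rule convex_hull_affine_triangle[OF \<open>0 \<le> \<epsilon>\<close> aff])
  also have "\<dots> \<subseteq> TD D"
    using TD by blast
  finally have "aff_dim (convex hull {P 0 0, P 0 \<epsilon>, P \<epsilon> \<epsilon>}) \<le> 1"
    using tree by (simp add: tight_span_is_tree_def)
  then show ?thesis
    by (simp add: collinear_aff_dim aff_dim_convex_hull)
qed

theorem tight_span_is_tree_truncations_nested:
  fixes D :: "'a::finite \<Rightarrow> 'a \<Rightarrow> real"
  assumes tree: "tight_span_is_tree D"
  shows "truncations_nested D"
  unfolding truncations_nested_def
proof (intro allI impI)
  fix y w and c d :: real
  assume c: "0 \<le> c" and d: "0 \<le> d"
  let ?T1 = "truncation D y c" and ?T2 = "truncation D w d"
  show "?T1 \<le> ?T2 \<or> ?T2 \<le> ?T1"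
  proof (rule ccontr)
    assume "\<not> (?T1 \<le> ?T2 \<or> ?T2 \<le> ?T1)"
    then obtain j k where j: "?T2 j < ?T1 j" and k: "?T1 k < ?T2 k"
      by (auto simp: le_fun_def not_le)
    have "y \<noteq> w"
    proof
      assume "y = w"
      then show False
        using j k truncation_antimono[of c d D y k] truncation_antimono[of d c D y j]
        by (cases "c \<le> d") auto
    qed
    \<comment> \<open>Raising the two truncation levels by s and t sweeps out a two-dimensional piece of T_D.\<close>
    define G where "G s t = sup (truncation D y (c + s)) (truncation D w (d + t))" for s t
    define P where "P s t = join_vec (G s t) (right_dual D (G s t))" for s t
    have "\<exists>A. \<exists>\<tau>\<in>{(0, 0), (-1, 0), (0, -1)}. near_origin (\<lambda>s t. G s t z = A + fst \<tau> * s + snd \<tau> * t)" for z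
      unfolding G_def by (rule sup_truncations_affine_near_origin)
    then obtain A B C where "near_origin (\<lambda>s t. P s t = A + s *\<^sub>R B + t *\<^sub>R C)"
      unfolding P_def using join_vec_affine_near_origin[of G D] by blast
    moreover have "0 < min (?T1 j - ?T2 j) (?T2 k - ?T1 k)" using j k by simp
    ultimately obtain \<epsilon> where \<epsilon>: "0 < \<epsilon>" "\<epsilon> < min (?T1 j - ?T2 j) (?T2 k - ?T1 k)"
      and aff: "\<And>s t. 0 \<le> s \<Longrightarrow> s \<le> t \<Longrightarrow> t \<le> \<epsilon> \<Longrightarrow> P s t = A + s *\<^sub>R B + t *\<^sub>R C"
      by (rule near_origin_witness) blast
    have "P s t \<in> TD D" if "0 \<le> s" "s \<le> t" for s t
      unfolding P_def G_def using \<open>y \<noteq> w\<close> c d that by (intro sup_truncations_in_TD) auto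
    then have col: "collinear {P 0 0, P 0 \<epsilon>, P \<epsilon> \<epsilon>}"
      using \<epsilon>(1) by (intro tight_span_is_tree_triangle_collinear[OF tree _ _ aff]) auto
    have Gj: "G s t j = ?T1 j - s" and Gk: "G t s k = ?T2 k - s" if "0 \<le> s" "s \<le> \<epsilon>" "0 \<le> t" for s t
      using that \<epsilon> sup_truncations_dominant[of D w d j \<epsilon> y c s t] sup_truncations_dominant[of D y c k \<epsilon> w d s t]
      by (simp_all add: G_def sup_commute)
    have "P 0 \<epsilon> $ Inl k \<noteq> P 0 0 $ Inl k" and "(P 0 \<epsilon> - P 0 0) $ Inl j = 0"
      using Gj[of 0 0] Gj[of 0 \<epsilon>] Gk[of 0 0] Gk[of \<epsilon> 0] \<epsilon>(1) by (simp_all add: P_def)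
    then have "(P \<epsilon> \<epsilon> - P 0 \<epsilon>) $ Inl j = 0"
      by (intro collinear_coordinate_zero[OF col]) auto
    then show False
      using Gj[of 0 \<epsilon>] Gj[of \<epsilon> \<epsilon>] \<epsilon>(1) by (simp add: P_def)
  qed
qed

section \<open>Realisations on directed paths\<close>

definition path_arcs :: "nat list \<Rightarrow> (nat \<times> nat) set" where
  "path_arcs p = {(p ! i, p ! Suc i) | i. Suc i < length p}"

lemma path_arcsI: "Suc i < length p \<Longrightarrow> (p ! i, p ! Suc i) \<in> path_arcs p"
  unfolding path_arcs_def by blast

lemma upath_rev:
  assumes "upath E q u v"
  shows "upath E (rev q) v u"
proof -
  have "uadj E (rev q ! i) (rev q ! Suc i)" if "Suc i < length q" for i
  proof -
    define k where "k = length q - Suc (Suc i)"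
    have "Suc k < length q" using that by (simp add: k_def)
    then have "uadj E (q ! k) (q ! Suc k)" using assms unfolding upath_def by blast
    moreover have "rev q ! i = q ! Suc k" "rev q ! Suc i = q ! k"
      using that by (simp_all add: rev_nth k_def Suc_diff_Suc)
    ultimately show ?thesis by (auto simp: uadj_def)
  qed
  with assms show ?thesis by (auto simp: upath_def hd_rev last_rev)
qed

lemma upath_path_arcs:
  assumes "distinct p" and "i \<le> j" and "j < length p"
  shows "upath (path_arcs p) (map ((!) p) [i..<Suc j]) (p ! i) (p ! j)"
  unfolding upath_def using assms
  by (auto simp: hd_map last_map distinct_map inj_on_def nth_eq_iff_index_eq uadj_def
      simp del: upt_Suc intro!: path_arcsI)

definition path_offset :: "nat list \<Rightarrow> (nat \<times> nat \<Rightarrow> real) \<Rightarrow> nat \<Rightarrow> real" where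
  "path_offset p \<alpha> k = (\<Sum>l<k. \<alpha> (p ! l, p ! Suc l))"

lemma path_offset_mono:
  assumes "\<forall>e\<in>path_arcs p. 0 \<le> \<alpha> e" and "i \<le> j" and "j < length p"
  shows "path_offset p \<alpha> i \<le> path_offset p \<alpha> j"
  unfolding path_offset_def
proof (rule sum_mono2)
  fix l assume "l \<in> {..<j} - {..<i}"
  then have "Suc l < length p" using assms by auto
  then show "0 \<le> \<alpha> (p ! l, p ! Suc l)" using assms(1) path_arcsI by blast
qed (use assms in auto)

lemma path_offset_diff:
  "i \<le> j \<Longrightarrow> path_offset p \<alpha> j - path_offset p \<alpha> i = (\<Sum>k<j - i. \<alpha> (p ! (i + k), p ! Suc (i + k)))"
  unfolding path_offset_def by (induction j) (auto simp: le_Suc_eq Suc_diff_le)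

lemma tree_dist_upath:
  assumes "oriented_tree V E" and "u \<in> V" and "v \<in> V" and "upath E q u v"
  shows "tree_dist E \<alpha> u v = (\<Sum>i<length q - 1. if (q ! i, q ! Suc i) \<in> E then \<alpha> (q ! i, q ! Suc i) else 0)"
  using assms the1_equality[of "\<lambda>q. upath E q u v" q] by (simp add: oriented_tree_def tree_dist_def)

lemma tree_dist_path_arcs:
  assumes d: "distinct p" and tree: "oriented_tree (set p) (path_arcs p)"
    and \<alpha>: "\<forall>e\<in>path_arcs p. 0 \<le> \<alpha> e" and i: "i < length p" and j: "j < length p"
  shows "tree_dist (path_arcs p) \<alpha> (p ! i) (p ! j) = max 0 (path_offset p \<alpha> j - path_offset p \<alpha> i)"
proof (cases "i \<le> j")
  case True
  let ?q = "map ((!) p) [i..<Suc j]"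
  have "tree_dist (path_arcs p) \<alpha> (p ! i) (p ! j) = (\<Sum>k<j - i. \<alpha> (p ! (i + k), p ! Suc (i + k)))"
    using tree_dist_upath[OF tree _ _ upath_path_arcs[OF d True j]] i j True
    by (simp add: path_arcsI Suc_diff_le del: upt_Suc)
  then show ?thesis
    using path_offset_mono[OF \<alpha> True j] by (simp add: path_offset_diff[OF True, symmetric])
next
  case False
  let ?q = "rev (map ((!) p) [j..<Suc i])"
  \<comment> \<open>Every step of the backward path runs against an arc, so it contributes nothing.\<close>
  have against: "(p ! Suc l, p ! l) \<notin> path_arcs p" if "Suc l < length p" for l
    using tree path_arcsI[OF that] by (auto simp: oriented_tree_def)
  have reversed: "(?q ! k, ?q ! Suc k) \<notin> path_arcs p" if "k < i - j" for k
  proof -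
    have "?q ! k = p ! Suc (i - Suc k)" "?q ! Suc k = p ! (i - Suc k)"
      using that i by (simp_all add: rev_nth Suc_diff_Suc del: upt_Suc)
    moreover have "Suc (i - Suc k) < length p" using that i by simp
    ultimately show ?thesis using against by simp
  qed
  have "tree_dist (path_arcs p) \<alpha> (p ! i) (p ! j) =
      (\<Sum>k<length ?q - 1. if (?q ! k, ?q ! Suc k) \<in> path_arcs p then \<alpha> (?q ! k, ?q ! Suc k) else 0)"
    using False i j by (intro tree_dist_upath[OF tree] upath_rev upath_path_arcs[OF d]) auto
  also have "\<dots> = 0"
    using reversed by (intro sum.neutral) (simp del: upt_Suc)
  finally show ?thesis
    using path_offset_mono[OF \<alpha> _ i, of j] False by simp
qed

lemma Min_pairwise_max0_diff:
  fixes P :: "nat \<Rightarrow> real"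
  assumes "finite U" "finite W" "u0 \<in> U" "w0 \<in> W"
    and "\<forall>u\<in>U. P u \<le> P u0" and "\<forall>w\<in>W. P w0 \<le> P w"
    and td: "\<forall>u\<in>U. \<forall>w\<in>W. td u w = max 0 (P w - P u)"
  shows "Min {td u w | u w. u \<in> U \<and> w \<in> W} = max 0 (P w0 - P u0)"
proof -
  let ?S = "{td u w | u w. u \<in> U \<and> w \<in> W}"
  have S: "finite ?S" "td u0 w0 \<in> ?S"
    using finite_image_set2[of "\<lambda>u. u \<in> U" "\<lambda>w. w \<in> W" td] assms(1-4) by auto
  have "Min ?S \<le> max 0 (P w0 - P u0)" using Min_le[OF S] td assms(3,4) by simp
  moreover obtain u w where uw: "u \<in> U" "w \<in> W" "Min ?S = td u w"
    using Min_in[OF S(1)] S(2) by blast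
  then have "P u \<le> P u0" "P w0 \<le> P w" using assms(5,6) by auto
  with uw td have "max 0 (P w0 - P u0) \<le> Min ?S" by (simp add: max_def)
  ultimately show ?thesis by simp
qed

theorem directed_path_realisation_interval_form:
  assumes r: "oriented_tree_realisation D V E \<alpha> F" and dp: "directed_path V E"
  shows "\<exists>a b. \<forall>x y. D x y = max 0 (a y - b x)"
proof -
  obtain p where d: "distinct p" and V: "set p = V" and E: "E = path_arcs p"
    using dp unfolding directed_path_def path_arcs_def by blast
  have tree: "oriented_tree (set p) (path_arcs p)" and \<alpha>: "\<forall>e\<in>path_arcs p. 0 \<le> \<alpha> e"
    and F: "\<And>x. subtree V E (F x)" and DF: "\<And>x y. D x y = tree_set_dist E \<alpha> (F x) (F y)"
    using r V E unfolding oriented_tree_realisation_def by auto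
  have "\<forall>v\<in>V. \<exists>k. k < length p \<and> p ! k = v" using V by (auto simp: in_set_conv_nth)
  then obtain idx where idx: "\<And>v. v \<in> V \<Longrightarrow> idx v < length p \<and> p ! idx v = v"
    by metis
  define pos where "pos v = path_offset p \<alpha> (idx v)" for v
  have dist: "tree_dist E \<alpha> u w = max 0 (pos w - pos u)" if "u \<in> V" "w \<in> V" for u w
    using tree_dist_path_arcs[OF d tree \<alpha>, of "idx u" "idx w"] idx[OF that(1)] idx[OF that(2)] E
    by (simp add: pos_def)
  have Fx: "F x \<noteq> {}" "F x \<subseteq> V" "finite (F x)" for x
    using F[of x] tree V finite_subset by (auto simp: subtree_def oriented_tree_def)
  define a where "a y = Min (pos ` F y)" for y
  define b where "b x = Max (pos ` F x)" for x
  have "D x y = max 0 (a y - b x)" for x y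
  proof -
    have "b x \<in> pos ` F x" "a y \<in> pos ` F y"
      unfolding a_def b_def using Fx by (intro Max_in Min_in; simp)+
    then obtain u0 w0 where u0: "u0 \<in> F x" "pos u0 = b x" and w0: "w0 \<in> F y" "pos w0 = a y"
      by (metis imageE)
    have "tree_set_dist E \<alpha> (F x) (F y) = max 0 (pos w0 - pos u0)"
      unfolding tree_set_dist_def
      using Fx u0 w0 dist by (intro Min_pairwise_max0_diff) (auto simp: a_def b_def subset_iff)
    then show ?thesis using DF u0 w0 by simp
  qed
  then show ?thesis by blast
qed

lemma unit_step_walk_up:
  assumes "distinct q"
    and step: "\<And>k. Suc k < length q \<Longrightarrow> q ! Suc k = Suc (q ! k) \<or> q ! k = Suc (q ! Suc k)"
    and up: "q ! Suc 0 = Suc (q ! 0)"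
  shows "k < length q \<Longrightarrow> q ! k = q ! 0 + k"
proof (induction k rule: induct_nat_012)
  case (ge2 n)
  then have "q ! n = q ! 0 + n" "q ! Suc n = q ! 0 + Suc n" by simp_all
  moreover have "q ! n \<noteq> q ! Suc (Suc n)"
    using \<open>distinct q\<close> ge2.prems by (simp add: nth_eq_iff_index_eq)
  ultimately show ?case using step[OF ge2.prems] by auto
qed (use up in simp_all)

lemma unit_step_walk_down:
  assumes "distinct q"
    and step: "\<And>k. Suc k < length q \<Longrightarrow> q ! Suc k = Suc (q ! k) \<or> q ! k = Suc (q ! Suc k)"
    and down: "q ! 0 = Suc (q ! Suc 0)"
  shows "k < length q \<Longrightarrow> q ! k + k = q ! 0"
proof (induction k rule: induct_nat_012)
  case (ge2 n)
  then have "q ! n + n = q ! 0" "q ! Suc n + Suc n = q ! 0" by simp_all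
  moreover have "q ! n \<noteq> q ! Suc (Suc n)"
    using \<open>distinct q\<close> ge2.prems by (simp add: nth_eq_iff_index_eq)
  ultimately show ?case using step[OF ge2.prems] by auto
qed (use down in simp_all)

lemma unit_step_walk_monotone:
  assumes "distinct q"
    and step: "\<And>k. Suc k < length q \<Longrightarrow> q ! Suc k = Suc (q ! k) \<or> q ! k = Suc (q ! Suc k)"
  shows "(\<forall>k<length q. q ! k = q ! 0 + k) \<or> (\<forall>k<length q. q ! k + k = q ! 0)"
proof (cases "Suc 0 < length q")
  case True
  then have "q ! Suc 0 = Suc (q ! 0) \<or> q ! 0 = Suc (q ! Suc 0)" by (rule step)
  then show ?thesis
  proof
    assume "q ! Suc 0 = Suc (q ! 0)"
    then show ?thesis using unit_step_walk_up[OF assms] by blast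
  next
    assume "q ! 0 = Suc (q ! Suc 0)"
    then show ?thesis using unit_step_walk_down[OF assms] by blast
  qed
next
  case False
  then have "\<forall>k<length q. k = 0" by simp
  then show ?thesis by auto
qed

lemma upath_upt:
  assumes "u \<le> v" and "v < m"
  shows "upath (path_arcs [0..<m]) [u..<Suc v] u v"
proof -
  have "map ((!) [0..<m]) [u..<Suc v] = [u..<Suc v]"
    using assms by (intro map_idI) auto
  then show ?thesis
    using upath_path_arcs[of "[0..<m]" u v] assms by (simp del: upt_Suc)
qed

lemma upath_upt_iff:
  assumes "u < m" and "v < m"
  shows "upath (path_arcs [0..<m]) q u v \<longleftrightarrow> q = (if u \<le> v then [u..<Suc v] else rev [v..<Suc u])"
proof
  assume q: "upath (path_arcs [0..<m]) q u v"
  then have ne: "q \<noteq> []" and q0: "q ! 0 = u" and ql: "q ! (length q - 1) = v"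
    by (auto simp: upath_def hd_conv_nth last_conv_nth)
  have "q ! Suc k = Suc (q ! k) \<or> q ! k = Suc (q ! Suc k)" if "Suc k < length q" for k
    using q that unfolding upath_def uadj_def path_arcs_def by auto
  then have "(\<forall>k<length q. q ! k = u + k) \<or> (\<forall>k<length q. q ! k + k = u)"
    using unit_step_walk_monotone[of q] q q0 by (auto simp: upath_def)
  then show "q = (if u \<le> v then [u..<Suc v] else rev [v..<Suc u])"
  proof
    assume up: "\<forall>k<length q. q ! k = u + k"
    then have "v = u + (length q - 1)" using ql ne by simp
    then have uv: "u \<le> v" and len: "length q = Suc v - u" using ne by auto
    have "q = [u..<Suc v]"
      by (rule nth_equalityI) (simp_all add: len up del: upt_Suc)
    with uv show ?thesis by simp
  next
    assume down: "\<forall>k<length q. q ! k + k = u"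
    then have "v + (length q - 1) = u" using ql ne by (metis diff_less length_greater_0_conv zero_less_one)
    then have vu: "v \<le> u" and len: "length q = Suc u - v" using ne by auto
    have "q = rev [v..<Suc u]"
    proof (rule nth_equalityI)
      show "length q = length (rev [v..<Suc u])" using vu by (simp add: len del: upt_Suc)
      fix k assume k: "k < length q"
      then have "q ! k = u - k" using down by (metis add_implies_diff)
      moreover have "rev [v..<Suc u] ! k = u - k"
        using k len vu by (simp add: rev_nth del: upt_Suc)
      ultimately show "q ! k = rev [v..<Suc u] ! k" by simp
    qed
    with vu show ?thesis by (cases "u = v") auto
  qed
next
  assume "q = (if u \<le> v then [u..<Suc v] else rev [v..<Suc u])"
  then show "upath (path_arcs [0..<m]) q u v"
    using assms upath_upt upath_rev[OF upath_upt, of v u m] by (simp del: upt_Suc)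
qed

lemma oriented_tree_upt:
  assumes "0 < m"
  shows "oriented_tree (set [0..<m]) (path_arcs [0..<m])"
  unfolding oriented_tree_def
proof (intro conjI ballI allI impI)
  show "finite (set [0..<m])" "set [0..<m] \<noteq> {}" using assms by simp_all
  show "path_arcs [0..<m] \<subseteq> set [0..<m] \<times> set [0..<m]" by (auto simp: path_arcs_def)
  fix u v assume "(u, v) \<in> path_arcs [0..<m]"
  then show "u \<noteq> v" "(v, u) \<notin> path_arcs [0..<m]" by (auto simp: path_arcs_def)
next
  fix u v assume "u \<in> set [0..<m]" "v \<in> set [0..<m]"
  then show "\<exists>!q. upath (path_arcs [0..<m]) q u v" by (simp add: upath_upt_iff)
qed

lemma tree_dist_sorted_line:
  assumes "sorted L" and "i < length L" and "j < length L"
  shows "tree_dist (path_arcs [0..<length L]) (\<lambda>e. L ! snd e - L ! fst e) i j = max 0 (L ! j - L ! i)"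
proof -
  let ?\<alpha> = "\<lambda>e. L ! snd e - L ! fst e"
  have offset: "path_offset [0..<length L] ?\<alpha> k = L ! k - L ! 0" if "k < length L" for k
  proof -
    have "path_offset [0..<length L] ?\<alpha> k = (\<Sum>l<k. L ! Suc l - L ! l)"
      unfolding path_offset_def using that by (intro sum.cong) auto
    also have "\<dots> = L ! k - L ! 0" by (rule sum_lessThan_telescope)
    finally show ?thesis .
  qed
  have "\<forall>e\<in>path_arcs [0..<length L]. 0 \<le> ?\<alpha> e"
    using assms(1) by (auto simp: path_arcs_def sorted_iff_nth_mono)
  moreover have "L \<noteq> []" using assms(2) by auto
  ultimately show ?thesis
    using tree_dist_path_arcs[OF _ oriented_tree_upt, of "length L" ?\<alpha> i j] assms by (simp add: offset)
qed

lemma subtree_sorted_interval: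
  assumes L: "sorted L" and lo: "i0 < length L" "lo \<le> L ! i0" "L ! i0 \<le> hi"
  shows "subtree (set [0..<length L]) (path_arcs [0..<length L]) {i. i < length L \<and> lo \<le> L ! i \<and> L ! i \<le> hi}"
  (is "subtree _ _ ?F")
  unfolding subtree_def
proof (intro conjI ballI)
  show "?F \<noteq> {}" "?F \<subseteq> set [0..<length L]" using lo by auto
  fix u v assume u: "u \<in> ?F" and v: "v \<in> ?F"
  define q where "q = (if u \<le> v then [u..<Suc v] else rev [v..<Suc u])"
  have "upath (path_arcs [0..<length L]) q u v"
    using u v by (simp add: q_def upath_upt_iff)
  moreover have "set q \<subseteq> ?F"
  proof
    fix z assume "z \<in> set q"
    then have "min u v \<le> z" "z \<le> max u v" by (auto simp: q_def split: if_splits)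
    then have "L ! min u v \<le> L ! z" "L ! z \<le> L ! max u v"
      using u v L by (auto intro!: sorted_nth_mono simp: min_def max_def)
    then show "z \<in> ?F" using u v \<open>z \<le> max u v\<close> by (auto simp: min_def max_def split: if_splits)
  qed
  ultimately show "\<exists>q. upath (path_arcs [0..<length L]) q u v \<and> set q \<subseteq> ?F" by blast
qed

theorem interval_form_directed_path_realisation:
  fixes D :: "'a::finite \<Rightarrow> 'a \<Rightarrow> real"
  assumes ab: "\<And>x. a x \<le> b x" and D: "\<And>x y. D x y = max 0 (a y - b x)"
  shows "\<exists>V E \<alpha> F. oriented_tree_realisation D V E \<alpha> F \<and> directed_path V E"
proof -
  \<comment> \<open>Vertices are the sorted interval endpoints; x is realised by the vertices in [a x, b x].\<close>
  define L where "L = sorted_list_of_set (range a \<union> range b)"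
  define E where "E = path_arcs [0..<length L]"
  define \<alpha> where "\<alpha> e = L ! snd e - L ! fst e" for e
  define F where "F x = {i. i < length L \<and> a x \<le> L ! i \<and> L ! i \<le> b x}" for x
  have L: "sorted L" "distinct L" "set L = range a \<union> range b" by (simp_all add: L_def)
  have index: "\<exists>i<length L. L ! i = v" if "v \<in> range a \<union> range b" for v
    using that L(3) by (metis in_set_conv_nth)
  have dist: "tree_dist E \<alpha> i j = max 0 (L ! j - L ! i)" if "i < length L" "j < length L" for i j
    unfolding E_def \<alpha>_def using L(1) that by (rule tree_dist_sorted_line)
  have F: "subtree (set [0..<length L]) E (F x)" for x
  proof -
    obtain i where "i < length L" "L ! i = a x" using index[of "a x"] by auto
    then show ?thesis
      unfolding E_def F_def using L(1) ab[of x] by (intro subtree_sorted_interval) auto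
  qed
  have "D x y = tree_set_dist E \<alpha> (F x) (F y)" for x y
  proof -
    obtain u0 where u0: "u0 < length L" "L ! u0 = b x" using index[of "b x"] by auto
    obtain w0 where w0: "w0 < length L" "L ! w0 = a y" using index[of "a y"] by auto
    have "tree_set_dist E \<alpha> (F x) (F y) = max 0 (L ! w0 - L ! u0)"
      unfolding tree_set_dist_def
      using u0 w0 ab[of x] ab[of y] dist by (intro Min_pairwise_max0_diff) (auto simp: F_def)
    then show ?thesis using D[of x y] u0 w0 by simp
  qed
  moreover have "oriented_tree (set [0..<length L]) E"
    unfolding E_def using index[of "a undefined"] by (intro oriented_tree_upt) auto
  moreover have "\<forall>e\<in>E. 0 \<le> \<alpha> e"
    using L(1) by (auto simp: E_def \<alpha>_def path_arcs_def sorted_iff_nth_mono)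
  ultimately have "oriented_tree_realisation D (set [0..<length L]) E \<alpha> F"
    unfolding oriented_tree_realisation_def using F by blast
  moreover have "directed_path (set [0..<length L]) E"
    unfolding directed_path_def E_def path_arcs_def by (intro exI[of _ "[0..<length L]"]) simp
  ultimately show ?thesis by blast
qed

theorem mainTheorem12:
  fixes D :: "'a::finite \<Rightarrow> 'a \<Rightarrow> real"
  assumes "directed_distance D"
  shows "tight_span_is_tree D \<longleftrightarrow>
    (\<exists>V E \<alpha> F. oriented_tree_realisation D V E \<alpha> F \<and> directed_path V E)"
proof
  assume "tight_span_is_tree D"
  then have "truncations_nested D"
    by (rule tight_span_is_tree_truncations_nested)
  with assms show "\<exists>V E \<alpha> F. oriented_tree_realisation D V E \<alpha> F \<and> directed_path V E"
    by (intro interval_form_directed_path_realisation[of "interval_lo D" "interval_hi D"]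
        interval_lo_le_hi truncations_nested_interval_form)
next
  assume "\<exists>V E \<alpha> F. oriented_tree_realisation D V E \<alpha> F \<and> directed_path V E"
  then obtain a b where "\<forall>x y. D x y = max 0 (a y - b x)"
    using directed_path_realisation_interval_form by blast
  then show "tight_span_is_tree D"
    by (intro interval_form_tight_span_is_tree) simp
qed

end
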